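(* Let $d\in\mathbb{N}$ and $M(t)=t\log(e+t)$, $t>0$. For every measurable $f$ on $\mathbb{R}^d\setminus\mathbb{B}^d$, $$\|Vf\|_{L_M(\mathbb{B}^d)}\leq (2d+2)\|f\|_{L_M(\mathbb{R}^d\setminus\mathbb{B}^d)}+(2d+2)\int_{\mathbb{R}^d\setminus\mathbb{B}^d}|f(s)|\log(1+|s|)ds.$$
   Context: $\mathbb{B}^d$ is the unit ball in $\mathbb{R}^d$; all spaces carry Lebesgue measure. $(Vf)(t)=|t|^{-2d}f(t/|t|^2)$, so for $f$ on $\mathbb{R}^d\setminus\mathbb{B}^d$ the function $Vf$ is defined on $\mathbb{B}^d$. For a measurable set $\Omega$, $\|g\|_{L_M(\Omega)}=\inf\{\lambda>0:\int_\Omega M(|g|/\lambda)\le1\}$. *)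

theory Defs
  imports "HOL-Analysis.Analysis"
begin

definition LlogL :: "real \<Rightarrow> real" where
  "LlogL t = t * ln (exp 1 + t)"

text \<open>Luxemburg norm on a set Omega w.r.t. Lebesgue measure, valued in [0, infinity]
  (the infimum of the empty set is infinity).\<close>
definition orlicz_norm :: "(real \<Rightarrow> real) \<Rightarrow> 'a::euclidean_space set \<Rightarrow> ('a \<Rightarrow> real) \<Rightarrow> ennreal" where
  "orlicz_norm M \<Omega> g =
     (INF c\<in>{c::real. c > 0 \<and> (\<integral>\<^sup>+ x\<in>\<Omega>. ennreal (M (\<bar>g x\<bar> / c)) \<partial>lebesgue) \<le> 1}. ennreal c)"

definition Vop :: "('a::euclidean_space \<Rightarrow> real) \<Rightarrow> 'a \<Rightarrow> real" where
  "Vop f t = norm t powr (- 2 * real DIM('a)) * f (t /\<^sub>R (norm t)\<^sup>2)"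

end

theory Submission
  imports Defs
begin

(*
  The inversion s \<mapsto> s / |s|^2 maps the exterior of the unit ball onto the punctured ball
  with Jacobian |s|^(-2d), so \<integral>_B h = \<integral>_{|s|>1} Vh for nonnegative h.  For h = M(|Vf| / l)
  one has Vh(s) = M(b |f(s)| / l) / b with b = |s|^(2d) \<ge> 1, and the elementary inequality
  M(b a) / b \<le> M(a) + a log b together with M(t a) \<le> t M(a) for t \<le> 1 gives, for 0 < c \<le> l,
    \<integral>_B M(|Vf| / l) \<le> (c / l) \<integral> M(|f| / c) + (2d / l) \<integral> |f(s)| log(1 + |s|).
  With l = c + 2d \<integral> |f(s)| log(1 + |s|) the right-hand side is at most 1 whenever c is admissible
  for the Luxemburg norm of f, whence \<parallel>Vf\<parallel> \<le> \<parallel>f\<parallel> + 2d \<integral> |f(s)| log(1 + |s|), which is sharper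
  than the claimed bound.
*)

definition sphere_inversion :: "'a::real_inner \<Rightarrow> 'a" where
  "sphere_inversion x = inverse (x \<bullet> x) *\<^sub>R x"

definition reflect_along :: "'a::real_inner \<Rightarrow> 'a \<Rightarrow> 'a" where
  "reflect_along x h = h - (2 * (x \<bullet> h) / (x \<bullet> x)) *\<^sub>R x"

lemma sphere_inversion_eq_0_iff [simp]: "sphere_inversion x = 0 \<longleftrightarrow> x = 0"
  by (simp add: sphere_inversion_def)

lemma sphere_inversion_sphere_inversion [simp]: "sphere_inversion (sphere_inversion x) = x"
  by (cases "x = 0") (auto simp: sphere_inversion_def field_simps)

lemma inner_sphere_inversion: "sphere_inversion x \<bullet> sphere_inversion x = inverse (x \<bullet> x)"
  by (cases "x \<bullet> x = 0") (auto simp: sphere_inversion_def field_simps power2_eq_square)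

lemma norm_sphere_inversion [simp]: "norm (sphere_inversion x) = inverse (norm x)"
  by (simp add: norm_eq_sqrt_inner inner_sphere_inversion real_sqrt_inverse)

lemma has_derivative_sphere_inversion:
  fixes x :: "'a::real_inner"
  assumes "x \<noteq> 0"
  shows "(sphere_inversion has_derivative (\<lambda>h. inverse (x \<bullet> x) *\<^sub>R reflect_along x h)) (at x within S)"
proof -
  have xx: "x \<bullet> x \<noteq> 0" using assms by simp
  have "((\<lambda>y. inverse (y \<bullet> y) *\<^sub>R y) has_derivative
     (\<lambda>h. inverse (x \<bullet> x) *\<^sub>R h + (- (inverse (x \<bullet> x) * (x \<bullet> h + h \<bullet> x) * inverse (x \<bullet> x))) *\<^sub>R x))
     (at x within S)"
    by (rule has_derivative_scaleR[OF Deriv.has_derivative_inverse[OF xx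
          has_derivative_inner[OF has_derivative_ident has_derivative_ident]] has_derivative_ident])
  moreover have "inverse (x \<bullet> x) *\<^sub>R h + (- (inverse (x \<bullet> x) * (x \<bullet> h + h \<bullet> x) * inverse (x \<bullet> x))) *\<^sub>R x
      = inverse (x \<bullet> x) *\<^sub>R reflect_along x h" for h
    by (simp add: reflect_along_def inner_commute[of h x] scaleR_diff_right divide_inverse algebra_simps)
  ultimately show ?thesis
    unfolding sphere_inversion_def[abs_def] by simp
qed

lemma orthogonal_transformation_reflect_along:
  fixes x :: "'a::real_inner"
  assumes "x \<noteq> 0"
  shows "orthogonal_transformation (reflect_along x)"
  unfolding orthogonal_transformation_def
proof
  show "linear (reflect_along x)"
    unfolding reflect_along_def
    by (auto intro!: linearI simp: inner_add_right algebra_simps add_divide_distrib scaleR_add_left)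
  have xx: "x \<bullet> x \<noteq> 0" using assms by simp
  show "\<forall>v w. reflect_along x v \<bullet> reflect_along x w = v \<bullet> w"
  proof (intro allI)
    fix v w
    let ?a = "2 * (x \<bullet> v) / (x \<bullet> x)" and ?b = "2 * (x \<bullet> w) / (x \<bullet> x)"
    have "reflect_along x v \<bullet> reflect_along x w = v \<bullet> w - ?b * (x \<bullet> v) - ?a * (x \<bullet> w) + ?a * ?b * (x \<bullet> x)"
      unfolding reflect_along_def inner_diff_left inner_diff_right inner_scaleR_left inner_scaleR_right
      by (simp add: inner_commute[of v x] inner_commute[of w x] algebra_simps)
    also have "\<dots> = v \<bullet> w"
      using xx by (simp add: divide_simps)
    finally show "reflect_along x v \<bullet> reflect_along x w = v \<bullet> w" .
  qed
qed

lemma reflect_along_reflect_along [simp]: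
  fixes x :: "'a::real_inner"
  assumes "x \<noteq> 0"
  shows "reflect_along x (reflect_along x h) = h"
proof -
  have "x \<bullet> reflect_along x h = - (x \<bullet> h)"
    using assms by (simp add: reflect_along_def inner_diff_right)
  then show ?thesis by (simp add: reflect_along_def[of x "reflect_along x h"]) (simp add: reflect_along_def)
qed

lemma reflect_along_scaleR_vector [simp]:
  fixes x :: "'a::real_inner"
  assumes "c \<noteq> 0"
  shows "reflect_along (c *\<^sub>R x) = reflect_along x"
  using assms by (auto simp: reflect_along_def power2_eq_square fun_eq_iff)

lemma reflect_along_scaleR: "reflect_along x (c *\<^sub>R h) = c *\<^sub>R reflect_along x h"
  by (simp add: reflect_along_def scaleR_diff_right)

lemma abs_det_sphere_inversion_derivative:
  fixes x :: "real^'n"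
  assumes "x \<noteq> 0"
  shows "\<bar>det (matrix (\<lambda>h. inverse (x \<bullet> x) *\<^sub>R reflect_along x h))\<bar> = inverse (x \<bullet> x) ^ CARD('n)"
proof -
  have orth: "orthogonal_transformation (reflect_along x)"
    using orthogonal_transformation_reflect_along[OF assms] .
  then have "linear (reflect_along x)"
    by (rule orthogonal_transformation_linear)
  then have "matrix (\<lambda>h. inverse (x \<bullet> x) *\<^sub>R reflect_along x h) = mat (inverse (x \<bullet> x)) ** matrix (reflect_along x)"
    using matrix_compose[of "reflect_along x" "(*\<^sub>R) (inverse (x \<bullet> x))"]
    by (simp add: matrix_scaleR linear_scaleR o_def)
  moreover have "det (mat (inverse (x \<bullet> x)) :: real^'n^'n) = inverse (x \<bullet> x) ^ CARD('n)"
    by (subst det_diagonal) (auto simp: mat_def)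
  moreover have "\<bar>det (matrix (reflect_along x))\<bar> = 1"
    using orth by simp
  ultimately show ?thesis
    by (simp add: det_mul abs_mult)
qed

lemma Vop_conv_sphere_inversion: "Vop f s = inverse (s \<bullet> s) ^ DIM('a) * f (sphere_inversion s)"
  for s :: "'a::euclidean_space"
proof (cases "s = 0")
  case False
  have "norm s powr (- 2 * real DIM('a)) = inverse (norm s ^ (2 * DIM('a)))"
    using False by (simp add: powr_minus powr_realpow[symmetric] mult.commute)
  then show ?thesis
    by (simp add: Vop_def sphere_inversion_def power_mult power2_norm_eq_inner power_inverse
        divide_inverse_commute)
qed (simp add: Vop_def)

lemma Vop_sphere_inversion:
  fixes s :: "'a::euclidean_space"
  shows "s \<noteq> 0 \<Longrightarrow> Vop f (sphere_inversion s) = (s \<bullet> s) ^ DIM('a) * f s"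
  by (simp add: Vop_conv_sphere_inversion inner_sphere_inversion)

lemma Vop_0 [simp]: "Vop f 0 = 0"
  by (simp add: Vop_def)

lemma Vop_mono: "(\<And>x. g x \<le> h x) \<Longrightarrow> Vop g s \<le> Vop h s"
  by (simp add: Vop_conv_sphere_inversion mult_left_mono)

lemma nn_integral_sphere_inversion_cart_bounded:
  fixes g :: "real^'n::{finite,wellorder} \<Rightarrow> real"
  assumes g_meas: "g \<in> borel_measurable lebesgue" and g_nonneg: "\<And>x. 0 \<le> g x"
    and g_bounded: "\<And>x. g x \<le> C" and g_supp: "\<And>x. x \<notin> ball 0 1 - {0} \<Longrightarrow> g x = 0"
  shows "(\<lambda>s. ennreal (Vop g s) * indicator (- cball 0 1) s) \<in> borel_measurable lebesgue"
    and "(\<integral>\<^sup>+x. ennreal (g x) \<partial>lebesgue) = (\<integral>\<^sup>+s\<in>- cball 0 1. ennreal (Vop g s) \<partial>lebesgue)"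
proof -
  define T where "T = ball 0 1 - {0 :: (real, 'n) vec}"
  define S where "S = - cball (0 :: (real, 'n) vec) 1"
  define D where "D x = (\<lambda>h. inverse (x \<bullet> x) *\<^sub>R reflect_along x h)" for x :: "(real, 'n) vec"
  define F where "F = (\<lambda>s. if s \<in> S then Vop g s else 0)"
  have "(\<integral>\<^sup>+x. ennreal (g x) \<partial>lebesgue) \<le> (\<integral>\<^sup>+x\<in>T. ennreal C \<partial>lebesgue)"
    by (rule nn_integral_mono) (use g_bounded g_supp in \<open>auto simp: T_def indicator_def intro: ennreal_leI\<close>)
  also have "\<dots> < \<infinity>"
    by (simp add: T_def nn_integral_cmult_indicator ennreal_mult_less_top emeasure_bounded_finite[unfolded infinity_ennreal_def] bounded_diff)
  finally obtain r where r: "(\<integral>\<^sup>+x. ennreal (g x) \<partial>lebesgue) = ennreal r" "0 \<le> r"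
    using less_top_ennreal by auto
  have "(g has_integral r) UNIV"
    using has_integral_iff_nn_integral_lebesgue[of g r] g_nonneg g_meas r by auto
  moreover have "(\<lambda>x. if x \<in> T then g x else 0) = g"
    using g_supp by (auto simp: T_def fun_eq_iff)
  ultimately have "(g has_integral r) T"
    by (metis has_integral_restrict_UNIV)
  moreover have "((\<lambda>x. \<bar>det (matrix (D x))\<bar> * g (sphere_inversion x)) has_integral r) S \<longleftrightarrow> (g has_integral r) T"
  proof (rule cov_invertible_nonneg_eq)
    show "(sphere_inversion has_derivative D x) (at x within S)" if "x \<in> S" for x
      using that unfolding D_def S_def by (intro has_derivative_sphere_inversion) auto
    show "(sphere_inversion has_derivative D y) (at y within T)" if "y \<in> T" for y
      using that unfolding D_def T_def by (intro has_derivative_sphere_inversion) auto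
    show "sphere_inversion x \<in> T \<and> sphere_inversion (sphere_inversion x) = x" if "x \<in> S" for x
      using that by (auto simp: S_def T_def inverse_less_1_iff)
    show "sphere_inversion y \<in> S \<and> sphere_inversion (sphere_inversion y) = y" if "y \<in> T" for y
      using that by (auto simp: S_def T_def inverse_le_1_iff)
    show "D y \<circ> D (sphere_inversion y) = id" if "y \<in> T" for y
      using that by (auto simp: D_def T_def inner_sphere_inversion sphere_inversion_def reflect_along_scaleR)
  qed (rule g_nonneg)
  moreover have "\<bar>det (matrix (D x))\<bar> * g (sphere_inversion x) = Vop g x" if "x \<in> S" for x
    using that unfolding D_def S_def
    by (subst abs_det_sphere_inversion_derivative) (auto simp: Vop_conv_sphere_inversion)
  ultimately have "(Vop g has_integral r) S"
    by (metis (no_types, lifting) has_integral_cong)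
  then have "(F has_integral r) UNIV"
    by (simp add: F_def has_integral_restrict_UNIV)
  moreover have "0 \<le> F x" for x
    using g_nonneg by (simp add: F_def Vop_conv_sphere_inversion)
  ultimately have F: "F \<in> borel_measurable lebesgue" "integral\<^sup>N lebesgue F = r"
    using has_integral_iff_nn_integral_lebesgue[of F r] by auto
  have F_eq: "ennreal (F s) = ennreal (Vop g s) * indicator (- cball 0 1) s" for s
    by (simp add: F_def S_def indicator_def)
  show "(\<lambda>s. ennreal (Vop g s) * indicator (- cball 0 1) s) \<in> borel_measurable lebesgue"
    using F(1) unfolding F_eq[symmetric] by measurable
  show "(\<integral>\<^sup>+x. ennreal (g x) \<partial>lebesgue) = (\<integral>\<^sup>+s\<in>- cball 0 1. ennreal (Vop g s) \<partial>lebesgue)"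
    using F(2) r by (simp add: F_eq[symmetric])
qed

lemma distr_lborel_isometry:
  fixes L :: "'a::euclidean_space \<Rightarrow> 'b::euclidean_space"
  assumes lin: "linear L" and inner: "\<And>x y. L x \<bullet> L y = x \<bullet> y" and basis: "L ` Basis = Basis"
  shows "distr lborel borel L = lborel"
proof -
  have "inj L"
  proof (rule injI)
    fix x y assume "L x = L y"
    then have "(x - y) \<bullet> (x - y) = 0"
      using inner[of "x - y" "x - y"] lin by (simp add: linear_diff)
    then show "x = y" by simp
  qed
  then have "bij_betw L Basis Basis"
    using basis by (simp add: bij_betw_def inj_on_subset[of L UNIV])
  have L_meas: "L \<in> borel_measurable borel"
    using lin by (intro borel_measurable_continuous_onI linear_continuous_on linear_conv_bounded_linear[THEN iffD1])
  have "lborel = distr lborel borel L"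
  proof (rule lborel_eqI)
    fix l u :: 'b assume le: "\<And>b. b \<in> Basis \<Longrightarrow> l \<bullet> b \<le> u \<bullet> b"
    define l' where "l' = (\<Sum>a\<in>Basis. (l \<bullet> L a) *\<^sub>R a)"
    define u' where "u' = (\<Sum>a\<in>Basis. (u \<bullet> L a) *\<^sub>R a)"
    have l': "l' \<bullet> a = l \<bullet> L a" and u': "u' \<bullet> a = u \<bullet> L a" if "a \<in> Basis" for a
      unfolding l'_def u'_def using that by (simp_all add: inner_sum_left inner_Basis if_distrib cong: if_cong)
    have "x \<in> L -` box l u \<longleftrightarrow> (\<forall>b\<in>L ` Basis. l \<bullet> b < L x \<bullet> b \<and> L x \<bullet> b < u \<bullet> b)" for x
      by (simp add: mem_box basis)
    also have "\<dots> x \<longleftrightarrow> x \<in> box l' u'" for x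
      by (simp add: mem_box inner l' u' inner_commute[of x])
    finally have box: "L -` box l u = box l' u'"
      by blast
    have "emeasure (distr lborel borel L) (box l u) = emeasure lborel (box l' u')"
      using L_meas by (simp add: emeasure_distr box)
    also have "\<dots> = (\<Prod>a\<in>Basis. (u - l) \<bullet> L a)"
      using le basis by (subst emeasure_lborel_box) (auto simp: l' u' inner_diff_left intro!: prod.cong)
    also have "\<dots> = (\<Prod>b\<in>Basis. (u - l) \<bullet> b)"
      using prod.reindex_bij_betw[OF \<open>bij_betw L Basis Basis\<close>, of "\<lambda>b. (u - l) \<bullet> b"] by simp
    finally show "emeasure (distr lborel borel L) (box l u) = (\<Prod>b\<in>Basis. (u - l) \<bullet> b)" .
  qed simp
  then show ?thesis by simp
qed

lemma
  fixes L :: "'a::euclidean_space \<Rightarrow> 'b::euclidean_space"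
  assumes "linear L" and "\<And>x y. L x \<bullet> L y = x \<bullet> y" and "L ` Basis = Basis"
  shows measurable_lebesgue_isometry: "L \<in> lebesgue \<rightarrow>\<^sub>M lebesgue"
    and distr_lebesgue_isometry: "distr lebesgue lebesgue L = lebesgue"
proof -
  have [measurable]: "L \<in> borel \<rightarrow>\<^sub>M borel"
    using assms(1) by (intro borel_measurable_continuous_onI linear_continuous_on linear_conv_bounded_linear[THEN iffD1])
  have lborel: "distr lborel borel L = lborel"
    using assms by (rule distr_lborel_isometry)
  have "emeasure lborel A = 0 \<longleftrightarrow> emeasure (distr lebesgue lborel L) A = 0" if "A \<in> sets borel" for A
    using that by (subst lborel[symmetric]) (simp add: distr_completion cong: distr_cong)
  then have null: "null_sets lborel = null_sets (distr lebesgue lborel L)"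
    by (auto simp: null_sets_def)
  show "L \<in> lebesgue \<rightarrow>\<^sub>M lebesgue"
    by (simp add: completion.measurable_completion2 null measurable_completion)
  have "lebesgue = completion (distr lebesgue lborel L)"
    by (subst lborel[symmetric]) (simp add: distr_completion cong: distr_cong)
  also have "\<dots> = distr lebesgue lebesgue L"
    by (subst completion.completion_distr_eq) (auto simp: null measurable_completion)
  finally show "distr lebesgue lebesgue L = lebesgue" ..
qed

text \<open>The change-of-variables theorem of the library is stated for \<open>real^'n\<close> with a finite
  well-ordered index type \<open>'n\<close>; the basis of a Euclidean space, turned into a type, serves as such
  an index.\<close>

typedef (overloaded) ('a::euclidean_space) basis_index = "Basis :: 'a set"
  using nonempty_Basis by blast

instance basis_index :: (euclidean_space) finite
proof
  have "(UNIV :: 'a basis_index set) = Abs_basis_index ` Basis"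
    using type_definition.univ[OF type_definition_basis_index] .
  then show "finite (UNIV :: 'a basis_index set)"
    by (metis finite_Basis finite_imageI)
qed

instantiation basis_index :: (euclidean_space) wellorder
begin

definition less_eq_basis_index :: "'a basis_index \<Rightarrow> 'a basis_index \<Rightarrow> bool" where
  "less_eq_basis_index i j \<longleftrightarrow> to_nat_on (UNIV :: 'a basis_index set) i \<le> to_nat_on UNIV j"

definition less_basis_index :: "'a basis_index \<Rightarrow> 'a basis_index \<Rightarrow> bool" where
  "less_basis_index i j \<longleftrightarrow> to_nat_on (UNIV :: 'a basis_index set) i < to_nat_on UNIV j"

instance
proof
  have inj: "inj (to_nat_on (UNIV :: 'a basis_index set))"
    by (rule inj_on_to_nat_on) simp
  fix i j k :: "'a basis_index"
  show "i < j \<longleftrightarrow> i \<le> j \<and> \<not> j \<le> i" by (auto simp: less_eq_basis_index_def less_basis_index_def)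
  show "i \<le> i" by (simp add: less_eq_basis_index_def)
  show "i \<le> j \<Longrightarrow> j \<le> k \<Longrightarrow> i \<le> k" by (simp add: less_eq_basis_index_def)
  show "i \<le> j \<Longrightarrow> j \<le> i \<Longrightarrow> i = j" using inj by (simp add: less_eq_basis_index_def inj_eq)
  show "i \<le> j \<or> j \<le> i" by (auto simp: less_eq_basis_index_def)
next
  fix P :: "'a basis_index \<Rightarrow> bool" and i
  assume step: "\<And>i. (\<And>j. j < i \<Longrightarrow> P j) \<Longrightarrow> P i"
  have "\<forall>i. to_nat_on (UNIV :: 'a basis_index set) i = n \<longrightarrow> P i" for n
    by (induction n rule: less_induct) (use step in \<open>auto simp: less_basis_index_def\<close>)
  then show "P i" by blast
qed

end

lemma bij_betw_Rep_basis_index: "bij_betw Rep_basis_index UNIV (Basis :: 'a::euclidean_space set)"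
  by (metis bij_betw_def inj_on_def Rep_basis_index_inject type_definition.Rep_range type_definition_basis_index)

lemma card_basis_index [simp]: "CARD('a::euclidean_space basis_index) = DIM('a)"
  using bij_betw_same_card[OF bij_betw_Rep_basis_index] by simp

lemma inner_Rep_basis_index: "Rep_basis_index i \<bullet> Rep_basis_index j = (if i = j then 1 else 0)"
  using Rep_basis_index[of i] Rep_basis_index[of j] by (auto simp: inner_Basis Rep_basis_index_inject)

lemma sum_basis_index: "(\<Sum>i\<in>UNIV. f (Rep_basis_index i)) = (\<Sum>b\<in>(Basis :: 'a::euclidean_space set). f b)"
  using sum.reindex_bij_betw[OF bij_betw_Rep_basis_index, of f] by simp

definition to_cart :: "'a::euclidean_space \<Rightarrow> real^'a basis_index" where
  "to_cart x = (\<chi> i. x \<bullet> Rep_basis_index i)"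

definition from_cart :: "real^'a::euclidean_space basis_index \<Rightarrow> 'a" where
  "from_cart y = (\<Sum>i\<in>UNIV. (y $ i) *\<^sub>R Rep_basis_index i)"

lemma from_cart_to_cart [simp]: "from_cart (to_cart x) = x"
  unfolding from_cart_def to_cart_def
  by (simp add: sum_basis_index[of "\<lambda>b. (x \<bullet> b) *\<^sub>R b"] euclidean_representation)

lemma to_cart_from_cart [simp]: "to_cart (from_cart y) = y"
proof -
  have "from_cart y \<bullet> Rep_basis_index i = y $ i" for i
    unfolding from_cart_def inner_sum_left by (simp add: inner_Rep_basis_index if_distrib cong: if_cong)
  then show ?thesis by (simp add: to_cart_def vec_eq_iff)
qed

lemma linear_to_cart: "linear to_cart"
  by (rule linearI) (simp_all add: to_cart_def vec_eq_iff inner_add_left)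

lemma linear_from_cart: "linear from_cart"
  by (rule linearI) (simp_all add: from_cart_def scaleR_add_left sum.distrib scaleR_sum_right)

lemma inner_to_cart [simp]: "to_cart x \<bullet> to_cart y = x \<bullet> y"
proof -
  have "to_cart x \<bullet> to_cart y = (\<Sum>i\<in>UNIV. (x \<bullet> Rep_basis_index i) * (y \<bullet> Rep_basis_index i))"
    by (simp add: to_cart_def inner_vec_def)
  also have "\<dots> = (\<Sum>b\<in>Basis. (x \<bullet> b) * (y \<bullet> b))"
    by (rule sum_basis_index)
  also have "\<dots> = x \<bullet> y"
    by (rule euclidean_inner[symmetric])
  finally show ?thesis .
qed

lemma inner_from_cart [simp]: "from_cart x \<bullet> from_cart y = x \<bullet> y"
  by (metis inner_to_cart to_cart_from_cart)

lemma norm_to_cart [simp]: "norm (to_cart x) = norm x"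
  by (simp add: norm_eq_sqrt_inner)

lemma norm_from_cart [simp]: "norm (from_cart y) = norm y"
  by (simp add: norm_eq_sqrt_inner)

lemma to_cart_Basis: "to_cart ` Basis = (Basis :: (real^'a::euclidean_space basis_index) set)"
proof -
  have "to_cart (Rep_basis_index i) = axis i 1" for i :: "'a basis_index"
    by (simp add: to_cart_def axis_def vec_eq_iff inner_Rep_basis_index)
  then have "to_cart ` range (Rep_basis_index :: 'a basis_index \<Rightarrow> 'a) = range (\<lambda>i. axis i 1)"
    by (simp add: image_image)
  then show ?thesis
    using bij_betw_Rep_basis_index by (auto simp: Basis_vec_def bij_betw_def)
qed

lemma from_cart_Basis: "from_cart ` Basis = (Basis :: 'a::euclidean_space set)"
proof -
  have "from_cart ` Basis = from_cart ` to_cart ` (Basis :: 'a set)"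
    by (simp add: to_cart_Basis)
  then show ?thesis
    by (simp add: image_image)
qed

lemma sphere_inversion_to_cart [simp]: "sphere_inversion (to_cart x) = to_cart (sphere_inversion x)"
  by (simp add: sphere_inversion_def linear_cmul[OF linear_to_cart])

lemma measurable_from_cart: "from_cart \<in> lebesgue \<rightarrow>\<^sub>M lebesgue"
  by (rule measurable_lebesgue_isometry[OF linear_from_cart inner_from_cart from_cart_Basis])

lemma nn_integral_to_cart:
  assumes "h \<in> borel_measurable lebesgue"
  shows "(\<integral>\<^sup>+y. h y \<partial>lebesgue) = (\<integral>\<^sup>+x. h (to_cart x) \<partial>lebesgue)"
proof -
  note to_cart = linear_to_cart inner_to_cart to_cart_Basis
  have "(\<integral>\<^sup>+y. h y \<partial>lebesgue) = (\<integral>\<^sup>+y. h y \<partial>distr lebesgue lebesgue to_cart)"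
    by (simp add: distr_lebesgue_isometry[OF to_cart])
  also have "\<dots> = (\<integral>\<^sup>+x. h (to_cart x) \<partial>lebesgue)"
    using assms by (intro nn_integral_distr measurable_lebesgue_isometry[OF to_cart]) simp
  finally show ?thesis .
qed

lemma nn_integral_sphere_inversion_bounded:
  fixes g :: "'a::euclidean_space \<Rightarrow> real"
  assumes g_meas: "g \<in> borel_measurable lebesgue" and g_nonneg: "\<And>x. 0 \<le> g x"
    and g_bounded: "\<And>x. g x \<le> C" and g_supp: "\<And>x. x \<notin> ball 0 1 - {0} \<Longrightarrow> g x = 0"
  shows "(\<integral>\<^sup>+x. ennreal (g x) \<partial>lebesgue) = (\<integral>\<^sup>+s\<in>- cball 0 1. ennreal (Vop g s) \<partial>lebesgue)"
proof -
  define g' where "g' y = g (from_cart y)" for y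
  have g'_meas: "g' \<in> borel_measurable lebesgue"
    unfolding g'_def by (rule measurable_compose[OF measurable_from_cart g_meas])
  have g'_supp: "g' y = 0" if "y \<notin> ball 0 1 - {0}" for y
    using that g_supp[of "from_cart y"] by (auto simp: g'_def linear_0[OF linear_from_cart])
  have "0 \<le> g' y" "g' y \<le> C" for y
    by (simp_all add: g'_def g_nonneg g_bounded)
  note cart = nn_integral_sphere_inversion_cart_bounded[of g' C, OF g'_meas this g'_supp]
  have "(\<integral>\<^sup>+x. ennreal (g x) \<partial>lebesgue) = (\<integral>\<^sup>+x. ennreal (g' (to_cart x)) \<partial>lebesgue)"
    by (simp add: g'_def)
  also have "\<dots> = (\<integral>\<^sup>+y. ennreal (g' y) \<partial>lebesgue)"
    using g'_meas by (intro nn_integral_to_cart[symmetric]) measurable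
  also have "\<dots> = (\<integral>\<^sup>+y\<in>- cball 0 1. ennreal (Vop g' y) \<partial>lebesgue)"
    by (rule cart(2))
  also have "\<dots> = (\<integral>\<^sup>+x\<in>- cball 0 1. ennreal (Vop g' (to_cart x)) \<partial>lebesgue)"
    using cart(1) by (subst nn_integral_to_cart) (auto simp: indicator_def)
  also have "\<dots> = (\<integral>\<^sup>+s\<in>- cball 0 1. ennreal (Vop g s) \<partial>lebesgue)"
    by (simp add: Vop_conv_sphere_inversion g'_def)
  finally show ?thesis .
qed

lemma nn_integral_ball_le_sphere_inversion:
  fixes h :: "'a::euclidean_space \<Rightarrow> real"
  assumes h_nonneg: "\<And>x. 0 \<le> h x" and h_0: "h 0 = 0"
  shows "(\<integral>\<^sup>+t\<in>ball 0 1. ennreal (h t) \<partial>lebesgue) \<le> (\<integral>\<^sup>+s\<in>- cball 0 1. ennreal (Vop h s) \<partial>lebesgue)"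
proof -
  \<comment> \<open>the change of variables is only available for integrable functions, so approximate \<open>h\<close>
    from below by bounded simple functions\<close>
  have "integral\<^sup>S lebesgue G \<le> (\<integral>\<^sup>+s\<in>- cball 0 1. ennreal (Vop h s) \<partial>lebesgue)"
    if G: "simple_function lebesgue G" "G \<le> (\<lambda>t. ennreal (h t) * indicator (ball 0 1) t)" "\<forall>x. G x < top"
    for G
  proof -
    define g where "g x = enn2real (G x)" for x
    have G_eq: "G = (\<lambda>x. ennreal (g x))"
      using G(3) by (simp add: g_def ennreal_enn2real_if less_top fun_eq_iff)
    have G_le: "G x \<le> ennreal (h x) * indicator (ball 0 1) x" for x
      using G(2) by (simp add: le_fun_def)
    have g_meas: "g \<in> borel_measurable lebesgue"
      unfolding g_def using borel_measurable_simple_function[OF G(1)] by measurable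
    have g_bounded: "g x \<le> Max (g ` UNIV)" for x
      using finite_imageI[OF simple_functionD(1)[OF G(1)], of enn2real]
      by (intro Max_ge) (auto simp: g_def image_image)
    have g_supp: "g x = 0" if "x \<notin> ball 0 1 - {0}" for x
      using that G_le[of x] h_0 by (cases "x = 0") (auto simp: g_def)
    have g_le: "g x \<le> h x" for x
    proof -
      have "G x \<le> ennreal (h x)"
        using G_le[of x] by (cases "norm x < 1") (auto simp: indicator_def)
      then show ?thesis
        using h_nonneg[of x] by (simp add: g_def enn2real_leI)
    qed
    have "integral\<^sup>S lebesgue G = (\<integral>\<^sup>+x. ennreal (g x) \<partial>lebesgue)"
      using nn_integral_eq_simple_integral[OF G(1)] by (simp add: G_eq)
    also have "\<dots> = (\<integral>\<^sup>+s\<in>- cball 0 1. ennreal (Vop g s) \<partial>lebesgue)"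
      by (rule nn_integral_sphere_inversion_bounded[OF g_meas _ g_bounded g_supp]) (simp add: g_def)
    also have "\<dots> \<le> (\<integral>\<^sup>+s\<in>- cball 0 1. ennreal (Vop h s) \<partial>lebesgue)"
      using g_le by (intro nn_integral_mono mult_right_mono ennreal_leI Vop_mono) auto
    finally show ?thesis .
  qed
  then show ?thesis
    unfolding nn_integral_def_finite[of _ "\<lambda>t. ennreal (h t) * indicator (ball 0 1) t"]
    by (intro SUP_least) auto
qed

lemma LlogL_0 [simp]: "LlogL 0 = 0"
  by (simp add: LlogL_def)

lemma LlogL_nonneg: "0 \<le> t \<Longrightarrow> 0 \<le> LlogL t"
  unfolding LlogL_def by (intro mult_nonneg_nonneg ln_ge_zero) (use exp_ge_add_one_self[of 1] in auto)

lemma LlogL_mult_le: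
  assumes "0 \<le> t" "t \<le> 1" "0 \<le> x"
  shows "LlogL (t * x) \<le> t * LlogL x"
proof -
  have "ln (exp 1 + t * x) \<le> ln (exp 1 + x)"
    using assms mult_left_le_one_le[of x t] by (subst ln_le_cancel_iff) (auto intro: add_pos_nonneg)
  then show ?thesis
    using assms by (simp add: LlogL_def mult.assoc mult_left_mono)
qed

lemma LlogL_dilation_le:
  assumes a: "0 \<le> a" and b: "1 \<le> b"
  shows "LlogL (b * a) / b \<le> LlogL a + a * ln b"
proof -
  have pos: "0 < exp 1 + a"
    using a by (simp add: add_pos_nonneg)
  have "exp 1 + b * a \<le> (exp 1 + a) * b"
    using a b mult_right_mono[of 1 b "exp 1"] by (simp add: algebra_simps)
  then have "ln (exp 1 + b * a) \<le> ln ((exp 1 + a) * b)"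
    using a b pos by (subst ln_le_cancel_iff) (auto intro: add_pos_nonneg)
  also have "\<dots> = ln (exp 1 + a) + ln b"
    using a b by (intro ln_mult_pos) (auto intro: add_pos_nonneg)
  finally have "a * ln (exp 1 + b * a) \<le> a * (ln (exp 1 + a) + ln b)"
    using a by (intro mult_left_mono)
  then show ?thesis
    using b by (simp add: LlogL_def algebra_simps)
qed

lemma Vop_LlogL_Vop_le:
  fixes f :: "'a::euclidean_space \<Rightarrow> real"
  assumes s: "1 < norm s" and c: "0 < c" "c \<le> l"
  shows "Vop (\<lambda>t. LlogL (\<bar>Vop f t\<bar> / l)) s
    \<le> c / l * LlogL (\<bar>f s\<bar> / c) + 2 * DIM('a) / l * (\<bar>f s\<bar> * ln (1 + norm s))"
proof -
  define b where "b = (s \<bullet> s) ^ DIM('a)"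
  define a where "a = \<bar>f s\<bar> / l"
  have ss: "1 < s \<bullet> s"
    using s by (simp add: power2_norm_eq_inner[symmetric] one_less_power)
  then have b: "1 \<le> b"
    by (simp add: b_def one_le_power)
  have a: "0 \<le> a"
    using c by (simp add: a_def)
  have "Vop f (sphere_inversion s) = b * f s"
    using s unfolding b_def by (intro Vop_sphere_inversion) auto
  then have "Vop (\<lambda>t. LlogL (\<bar>Vop f t\<bar> / l)) s = LlogL (b * a) / b"
    unfolding Vop_conv_sphere_inversion[of "\<lambda>t. LlogL (\<bar>Vop f t\<bar> / l)"]
    using b by (simp add: a_def b_def abs_mult power_inverse divide_inverse_commute mult.left_commute)
  also have "\<dots> \<le> LlogL a + a * ln b"
    using a b by (rule LlogL_dilation_le)
  also have "\<dots> \<le> c / l * LlogL (\<bar>f s\<bar> / c) + 2 * DIM('a) / l * (\<bar>f s\<bar> * ln (1 + norm s))"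
  proof (rule add_mono)
    have "LlogL a = LlogL (c / l * (\<bar>f s\<bar> / c))"
      using c by (simp add: a_def)
    also have "\<dots> \<le> c / l * LlogL (\<bar>f s\<bar> / c)"
      using c by (intro LlogL_mult_le) auto
    finally show "LlogL a \<le> c / l * LlogL (\<bar>f s\<bar> / c)" .
    have "ln (s \<bullet> s) \<le> ln ((1 + norm s) ^ 2)"
      using ss s by (subst ln_le_cancel_iff) (auto simp: power2_norm_eq_inner[symmetric] power_mono)
    then have "ln b \<le> 2 * DIM('a) * ln (1 + norm s)"
      using ss s by (simp add: b_def ln_realpow mult_left_mono)
    then have "a * ln b \<le> a * (2 * DIM('a) * ln (1 + norm s))"
      using a by (rule mult_left_mono)
    then show "a * ln b \<le> 2 * DIM('a) / l * (\<bar>f s\<bar> * ln (1 + norm s))"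
      by (simp add: a_def mult.left_commute)
  qed
  finally show ?thesis .
qed

lemma nn_integral_LlogL_Vop_le:
  fixes f :: "'a::euclidean_space \<Rightarrow> real"
  assumes f[measurable]: "f \<in> borel_measurable (lebesgue_on (- ball 0 1))" and c: "0 < c" "c \<le> l"
  shows "(\<integral>\<^sup>+t\<in>ball 0 1. ennreal (LlogL (\<bar>Vop f t\<bar> / l)) \<partial>lebesgue)
    \<le> ennreal (c / l) * (\<integral>\<^sup>+s\<in>- ball 0 1. ennreal (LlogL (\<bar>f s\<bar> / c)) \<partial>lebesgue)
      + ennreal (2 * DIM('a) / l) * (\<integral>\<^sup>+s\<in>- ball 0 1. ennreal (\<bar>f s\<bar> * ln (1 + norm s)) \<partial>lebesgue)"
proof -
  let ?E = "- ball (0::'a) 1"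
  define A where "A s = LlogL (\<bar>f s\<bar> / c)" for s
  define B where "B s = \<bar>f s\<bar> * ln (1 + norm s)" for s
  have l: "0 < l"
    using c by linarith
  have E: "?E \<in> sets lebesgue"
    by (simp add: Compl_in_sets_lebesgue)
  have [measurable]: "(\<lambda>s. s) \<in> borel_measurable (lebesgue_on ?E)"
    using E by (intro continuous_imp_measurable_on_sets_lebesgue continuous_on_id)
  have [measurable]: "A \<in> borel_measurable (lebesgue_on ?E)" "B \<in> borel_measurable (lebesgue_on ?E)"
    unfolding A_def B_def LlogL_def by measurable
  have A_nonneg: "0 \<le> A s" and B_nonneg: "0 \<le> B s" for s
    using c by (simp_all add: A_def B_def LlogL_nonneg)
  have "(\<integral>\<^sup>+t\<in>ball 0 1. ennreal (LlogL (\<bar>Vop f t\<bar> / l)) \<partial>lebesgue)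
      \<le> (\<integral>\<^sup>+s\<in>- cball 0 1. ennreal (Vop (\<lambda>t. LlogL (\<bar>Vop f t\<bar> / l)) s) \<partial>lebesgue)"
    using l by (intro nn_integral_ball_le_sphere_inversion LlogL_nonneg) auto
  also have "\<dots> \<le> (\<integral>\<^sup>+s\<in>?E. ennreal (c / l * A s + 2 * DIM('a) / l * B s) \<partial>lebesgue)"
    using Vop_LlogL_Vop_le[OF _ c, of _ f]
    by (intro nn_integral_mono) (auto simp: A_def B_def indicator_def intro!: ennreal_leI)
  also have "\<dots> = (\<integral>\<^sup>+s. ennreal (c / l * A s + 2 * DIM('a) / l * B s) \<partial>lebesgue_on ?E)"
    using E by (simp add: nn_integral_restrict_space)
  also have "\<dots> = ennreal (c / l) * (\<integral>\<^sup>+s. ennreal (A s) \<partial>lebesgue_on ?E)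
      + ennreal (2 * DIM('a) / l) * (\<integral>\<^sup>+s. ennreal (B s) \<partial>lebesgue_on ?E)"
    using c l A_nonneg B_nonneg
    by (simp add: ennreal_plus ennreal_mult nn_integral_add nn_integral_cmult del: times_divide_eq_left)
  also have "\<dots> = ennreal (c / l) * (\<integral>\<^sup>+s\<in>?E. ennreal (A s) \<partial>lebesgue)
      + ennreal (2 * DIM('a) / l) * (\<integral>\<^sup>+s\<in>?E. ennreal (B s) \<partial>lebesgue)"
    using E by (simp add: nn_integral_restrict_space)
  finally show ?thesis
    by (simp add: A_def B_def)
qed

lemma orlicz_norm_le:
  assumes "0 < l" and "(\<integral>\<^sup>+x\<in>\<Omega>. ennreal (M (\<bar>g x\<bar> / l)) \<partial>lebesgue) \<le> 1"
  shows "orlicz_norm M \<Omega> g \<le> ennreal l"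
  unfolding orlicz_norm_def using assms by (intro INF_lower) simp

lemma le_INF_add_ennreal:
  fixes V X :: ennreal
  assumes "\<And>c. c \<in> S \<Longrightarrow> V \<le> f c + X"
  shows "V \<le> (INF c\<in>S. f c) + X"
proof (cases "S = {}")
  case False
  have "(INF c\<in>S. f c + X) = (INF c\<in>S. f c) + X"
    by (subst continuous_at_Inf_mono[where f="\<lambda>x. x + X"])
       (auto simp: mono_def add_mono False continuous_at_imp_continuous_at_within image_comp
         intro: continuous_add)
  then show ?thesis
    using assms by (metis INF_greatest)
qed simp

lemma orlicz_norm_LlogL_Vop_le:
  fixes f :: "'a::euclidean_space \<Rightarrow> real"
  assumes f: "f \<in> borel_measurable (lebesgue_on (- ball 0 1))"
  shows "orlicz_norm LlogL (ball 0 1) (Vop f)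
    \<le> orlicz_norm LlogL (- ball 0 1) f
      + ennreal (2 * real DIM('a)) * (\<integral>\<^sup>+s\<in>- ball 0 1. ennreal (\<bar>f s\<bar> * ln (1 + norm s)) \<partial>lebesgue)"
    (is "_ \<le> _ + ennreal ?d * ?I")
proof (cases "?I = \<infinity>")
  case True
  then show ?thesis
    by (simp add: ennreal_mult_top)
next
  case False
  then obtain i where I: "?I = ennreal i" "0 \<le> i"
    using less_top_ennreal by (auto simp: less_top)
  have "orlicz_norm LlogL (ball 0 1) (Vop f) \<le> ennreal c + ennreal ?d * ?I"
    if "c \<in> {c. 0 < c \<and> (\<integral>\<^sup>+x\<in>- ball 0 1. ennreal (LlogL (\<bar>f x\<bar> / c)) \<partial>lebesgue) \<le> 1}" for c
  proof -
    define l where "l = c + ?d * i"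
    have c: "0 < c" and modular: "(\<integral>\<^sup>+x\<in>- ball 0 1. ennreal (LlogL (\<bar>f x\<bar> / c)) \<partial>lebesgue) \<le> 1"
      using that by auto
    have l: "0 < l" "c \<le> l"
      using c I(2) by (simp_all add: l_def add_pos_nonneg)
    have "(\<integral>\<^sup>+t\<in>ball 0 1. ennreal (LlogL (\<bar>Vop f t\<bar> / l)) \<partial>lebesgue)
        \<le> ennreal (c / l) * 1 + ennreal (?d / l) * ennreal i"
      using nn_integral_LlogL_Vop_le[OF f c l(2)] modular I(1)
      by (elim order_trans) (intro add_mono mult_left_mono order_refl; simp)
    also have "\<dots> = ennreal (c / l + ?d / l * i)"
      using c l I(2) by (simp add: ennreal_plus ennreal_mult del: times_divide_eq_left)
    also have "c / l + ?d / l * i = 1"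
      using l(1) by (simp add: add_divide_distrib[symmetric] l_def[symmetric])
    finally have "(\<integral>\<^sup>+t\<in>ball 0 1. ennreal (LlogL (\<bar>Vop f t\<bar> / l)) \<partial>lebesgue) \<le> 1"
      by simp
    then have "orlicz_norm LlogL (ball 0 1) (Vop f) \<le> ennreal l"
      by (rule orlicz_norm_le[OF l(1)])
    also have "ennreal l = ennreal c + ennreal ?d * ?I"
      using c I by (simp add: l_def ennreal_plus ennreal_mult)
    finally show ?thesis .
  qed
  then show ?thesis
    unfolding orlicz_norm_def[of _ "- ball 0 1"] by (rule le_INF_add_ennreal)
qed

theorem lemmaA1:
  fixes f :: "'a::euclidean_space \<Rightarrow> real"
  assumes "f \<in> borel_measurable (lebesgue_on (- ball 0 1))"
  shows "orlicz_norm LlogL (ball 0 1) (Vop f)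
           \<le> ennreal (2 * real DIM('a) + 2) * orlicz_norm LlogL (- ball 0 1) f
             + ennreal (2 * real DIM('a) + 2) *
               (\<integral>\<^sup>+ s\<in>(- ball 0 1). ennreal (\<bar>f s\<bar> * ln (1 + norm s)) \<partial>lebesgue)"
proof -
  let ?K = "ennreal (2 * real DIM('a) + 2)"
  let ?N = "orlicz_norm LlogL (- ball 0 1) f"
  let ?I = "\<integral>\<^sup>+ s\<in>(- ball 0 1). ennreal (\<bar>f s\<bar> * ln (1 + norm s)) \<partial>lebesgue"
  have "orlicz_norm LlogL (ball 0 1) (Vop f) \<le> ?N + ennreal (2 * real DIM('a)) * ?I"
    using assms by (rule orlicz_norm_LlogL_Vop_le)
  also have "\<dots> \<le> ?K * ?N + ?K * ?I"
  proof (rule add_mono)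
    have "ennreal 1 \<le> ?K"
      by (rule ennreal_leI) simp
    then show "?N \<le> ?K * ?N"
      using mult_right_mono[of 1 ?K ?N] by simp
    show "ennreal (2 * real DIM('a)) * ?I \<le> ?K * ?I"
      by (intro mult_right_mono ennreal_leI) auto
  qed
  finally show ?thesis .
qed

end
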